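(* Let $n\ge 1$, let $T_{n+2}$ be a tournament (strong preference pattern) on a set of $n+2$ candidates, let $a,b$ be two of these candidates, and let $T_n=T_{n+2}\setminus\{a,b\}$ be the subtournament induced on the remaining $n$ candidates. Then $v(T_{n+2})\le v(T_n)+2$.
   Context: A voter on a finite candidate set $A$ is a linear order (ranking) of $A$. A set of voters is a nonempty finite multiset of voters. A strong preference pattern on $A$ is a tournament $T$ on vertex set $A$. A set of voters $U$ generates $T$ if for every pair of distinct candidates $x,y$, the arc $(x,y)$ is in $T$ if and only if strictly more voters of $U$ rank $x$ above $y$ than rank $y$ above $x$. For a tournament $T$, $v(T)$ denotes the minimum size of a set of voters generating $T$. *)

theory Defs
  imports Main "HOL-Library.Multiset"
begin

text \<open>A voter on the candidate set A is a linear order (ranking) of A, represented as a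
  list enumerating A without repetition, from most preferred to least preferred.\<close>
definition is_voter :: "'a set \<Rightarrow> 'a list \<Rightarrow> bool" where
  "is_voter A r \<longleftrightarrow> distinct r \<and> set r = A"

definition ranks_above :: "'a list \<Rightarrow> 'a \<Rightarrow> 'a \<Rightarrow> bool" where
  "ranks_above r x y \<longleftrightarrow> (\<exists>i j. i < j \<and> j < length r \<and> r ! i = x \<and> r ! j = y)"

definition is_voter_set :: "'a set \<Rightarrow> 'a list multiset \<Rightarrow> bool" where
  "is_voter_set A U \<longleftrightarrow> U \<noteq> {#} \<and> (\<forall>r \<in># U. is_voter A r)"

definition tournament :: "'a set \<Rightarrow> ('a \<times> 'a) set \<Rightarrow> bool" where
  "tournament A T \<longleftrightarrow> T \<subseteq> A \<times> A \<and> (\<forall>x \<in> A. (x, x) \<notin> T) \<and>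
     (\<forall>x \<in> A. \<forall>y \<in> A. x \<noteq> y \<longrightarrow> ((x, y) \<in> T \<longleftrightarrow> (y, x) \<notin> T))"

definition generates :: "'a set \<Rightarrow> 'a list multiset \<Rightarrow> ('a \<times> 'a) set \<Rightarrow> bool" where
  "generates A U T \<longleftrightarrow> is_voter_set A U \<and>
     (\<forall>x \<in> A. \<forall>y \<in> A. x \<noteq> y \<longrightarrow>
        ((x, y) \<in> T \<longleftrightarrow>
          size (filter_mset (\<lambda>r. ranks_above r y x) U) < size (filter_mset (\<lambda>r. ranks_above r x y) U)))"

definition vnum :: "'a set \<Rightarrow> ('a \<times> 'a) set \<Rightarrow> nat" where
  "vnum A T = (LEAST k. \<exists>U. generates A U T \<and> size U = k)"

end

theory Submission
  imports Defs
begin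

text \<open>Work with margins: the number of voters ranking x above y minus the number ranking y
  above x. A minimal profile for the small tournament may be taken of odd size 2m + 1: for even
  size every margin is even and nonzero, so dropping a voter keeps all signs. Put the two new
  candidates, in the order chosen by the tournament, on top of m + 1 of these voters and at the
  bottom of the remaining m; every margin involving a new candidate is then +1 in its favour.
  Two further voters, mutually reverse on the old candidates, lower the margin of each new
  candidate by exactly 2 against the old candidates that beat it, and change nothing else.\<close>

lemma ranks_above_Cons [simp]:
  "ranks_above (z # zs) x y \<longleftrightarrow> z = x \<and> y \<in> set zs \<or> ranks_above zs x y"
proof
  assume "ranks_above (z # zs) x y"
  then obtain i j where ij: "i < j" "j < Suc (length zs)" "(z # zs) ! i = x" "(z # zs) ! j = y"
    by (auto simp: ranks_above_def)
  then obtain j' where j: "j = Suc j'" by (cases j) auto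
  show "z = x \<and> y \<in> set zs \<or> ranks_above zs x y"
  proof (cases i)
    case 0 then show ?thesis using ij j by auto
  next
    case (Suc i') then show ?thesis using ij j unfolding ranks_above_def by auto
  qed
next
  assume "z = x \<and> y \<in> set zs \<or> ranks_above zs x y"
  then show "ranks_above (z # zs) x y"
  proof
    assume "z = x \<and> y \<in> set zs"
    then obtain j where "j < length zs" "zs ! j = y" "z = x" by (auto simp: in_set_conv_nth)
    then show ?thesis unfolding ranks_above_def
      by (intro exI[of _ 0] exI[of _ "Suc j"]) auto
  next
    assume "ranks_above zs x y"
    then obtain i j where "i < j" "j < length zs" "zs ! i = x" "zs ! j = y"
      by (auto simp: ranks_above_def)
    then show ?thesis unfolding ranks_above_def
      by (intro exI[of _ "Suc i"] exI[of _ "Suc j"]) auto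
  qed
qed

lemma ranks_above_Nil [simp]: "\<not> ranks_above [] x y"
  by (simp add: ranks_above_def)

lemma ranks_above_append [simp]:
  "ranks_above (xs @ ys) x y \<longleftrightarrow>
     ranks_above xs x y \<or> ranks_above ys x y \<or> x \<in> set xs \<and> y \<in> set ys"
  by (induction xs) auto

lemma ranks_above_rev [simp]: "ranks_above (rev xs) x y \<longleftrightarrow> ranks_above xs y x"
  by (induction xs) auto

lemma ranks_above_in_set: "ranks_above r x y \<Longrightarrow> x \<in> set r \<and> y \<in> set r"
  by (induction r) auto

lemma not_ranks_above_if_notin:
  "x \<notin> set r \<Longrightarrow> \<not> ranks_above r x y"
  "y \<notin> set r \<Longrightarrow> \<not> ranks_above r x y"
  by (auto dest: ranks_above_in_set)

lemma ranks_above_total: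
  "x \<in> set r \<Longrightarrow> y \<in> set r \<Longrightarrow> x \<noteq> y \<Longrightarrow> ranks_above r x y \<or> ranks_above r y x"
  by (induction r) auto

lemma ranks_above_asym: "distinct r \<Longrightarrow> ranks_above r x y \<Longrightarrow> \<not> ranks_above r y x"
  by (induction r) (auto dest: ranks_above_in_set)

lemma ranks_above_filter:
  "P x \<Longrightarrow> P y \<Longrightarrow> ranks_above (filter P r) x y \<longleftrightarrow> ranks_above r x y"
  by (induction r) auto

lemma tournament_restrict: "tournament A T \<Longrightarrow> B \<subseteq> A \<Longrightarrow> tournament B (T \<inter> B \<times> B)"
  unfolding tournament_def by blast

definition margin :: "'a list multiset \<Rightarrow> 'a \<Rightarrow> 'a \<Rightarrow> int" where
  "margin U x y = int (size (filter_mset (\<lambda>r. ranks_above r x y) U))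
                - int (size (filter_mset (\<lambda>r. ranks_above r y x) U))"

lemma margin_antisym: "margin U y x = - margin U x y"
  by (simp add: margin_def)

lemma margin_empty [simp]: "margin {#} x y = 0"
  by (simp add: margin_def)

lemma margin_add_mset:
  "margin (add_mset r U) x y =
     of_bool (ranks_above r x y) - of_bool (ranks_above r y x) + margin U x y"
  by (simp add: margin_def)

lemma margin_union [simp]: "margin (U + V) x y = margin U x y + margin V x y"
  by (simp add: margin_def)

lemma generates_iff_margin:
  "generates A U T \<longleftrightarrow> is_voter_set A U \<and>
     (\<forall>x\<in>A. \<forall>y\<in>A. x \<noteq> y \<longrightarrow> ((x, y) \<in> T \<longleftrightarrow> 0 < margin U x y))"
  by (simp add: generates_def margin_def)

lemma margin_image_mset_eq:
  assumes "\<And>r. r \<in># U \<Longrightarrow>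
    ranks_above (f r) x y = ranks_above r x y \<and> ranks_above (f r) y x = ranks_above r y x"
  shows "margin (image_mset f U) x y = margin U x y"
  using assms by (induction U) (auto simp: margin_add_mset)

lemma margin_image_mset_above:
  assumes "\<And>r. r \<in># U \<Longrightarrow> ranks_above (f r) x y \<and> \<not> ranks_above (f r) y x"
  shows "margin (image_mset f U) x y = int (size U)"
  using assms by (induction U) (auto simp: margin_add_mset)

lemma margin_parity:
  assumes "\<And>r. r \<in># U \<Longrightarrow> is_voter B r" and "x \<in> B" "y \<in> B" "x \<noteq> y"
  shows "odd (margin U x y) \<longleftrightarrow> odd (size U)"
  using assms
proof (induction U)
  case (add r U)
  have "distinct r" "set r = B" using add.prems(1) by (auto simp: is_voter_def)
  then have "ranks_above r y x \<longleftrightarrow> \<not> ranks_above r x y"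
    using ranks_above_total[of x r y] ranks_above_asym[of r] add.prems by blast
  then have "margin (add_mset r U) x y = (if ranks_above r x y then 1 else -1) + margin U x y"
    by (simp add: margin_add_mset)
  moreover have "odd (margin U x y) \<longleftrightarrow> odd (size U)"
    using add by simp
  ultimately show ?case by simp
qed simp

lemma margin_nonzero:
  assumes "generates A U T" "tournament A T" "x \<in> A" "y \<in> A" "x \<noteq> y"
  shows "margin U x y \<noteq> 0"
proof
  assume "margin U x y = 0"
  moreover have "margin U y x = - margin U x y" by (rule margin_antisym)
  ultimately have "(x, y) \<notin> T" "(y, x) \<notin> T"
    using assms(1,3-5) unfolding generates_iff_margin by simp_all
  then show False using assms(2-5) unfolding tournament_def by blast
qed

lemma generates_if_margin_positive:
  assumes tour: "tournament A T" and voters: "is_voter_set A U"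
    and pos: "\<And>x y. (x, y) \<in> T \<Longrightarrow> 0 < margin U x y"
  shows "generates A U T"
  unfolding generates_iff_margin
proof (intro conjI ballI impI)
  fix x y assume "x \<in> A" "y \<in> A" "x \<noteq> y"
  then have "(x, y) \<in> T \<or> (y, x) \<in> T" using tour unfolding tournament_def by blast
  moreover have "margin U y x = - margin U x y" by (rule margin_antisym)
  ultimately show "(x, y) \<in> T \<longleftrightarrow> 0 < margin U x y"
    using pos[of x y] pos[of y x] by linarith
qed (fact voters)

lemma generates_odd_subprofile:
  assumes gen: "generates A U T" and tour: "tournament A T"
  shows "\<exists>U'. generates A U' T \<and> odd (size U') \<and> size U' \<le> size U"
proof (cases "odd (size U)")
  case False
  have voters: "is_voter_set A U" using gen by (simp add: generates_def)
  then obtain r V where U: "U = add_mset r V" by (metis is_voter_set_def multiset_cases)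
  have "V \<noteq> {#}" using False U by auto
  then have "is_voter_set A V" using voters U by (simp add: is_voter_set_def)
  moreover have "(x, y) \<in> T \<longleftrightarrow> 0 < margin V x y"
    if "x \<in> A" "y \<in> A" "x \<noteq> y" for x y
  proof -
    have "margin U x y \<noteq> 0" using margin_nonzero[OF gen tour that] .
    moreover have "even (margin U x y)"
      using margin_parity[of U A x y] voters that False by (simp add: is_voter_set_def)
    ultimately have "\<bar>margin U x y\<bar> \<ge> 2" by presburger
    \<comment> \<open>removing one voter changes the margin by at most one, so its sign survives\<close>
    moreover have "\<bar>margin U x y - margin V x y\<bar> \<le> 1" using U by (simp add: margin_add_mset)
    moreover have "(x, y) \<in> T \<longleftrightarrow> 0 < margin U x y"
      using gen that unfolding generates_iff_margin by blast
    ultimately show ?thesis by linarith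
  qed
  ultimately have "generates A V T" by (simp add: generates_iff_margin)
  then show ?thesis using U False by auto
qed (use gen in blast)

lemma odd_size_mset_split:
  fixes U :: "'a multiset"
  assumes "odd (size U)"
  obtains Top Bot where "U = Top + Bot" "size Top = size Bot + 1"
proof -
  obtain xs where xs: "mset xs = U" using ex_mset by blast
  define k where "k = Suc (length xs div 2)"
  have "U = mset (take k xs) + mset (drop k xs)"
    by (metis xs append_take_drop_id mset_append)
  moreover have "size (mset (take k xs)) = size (mset (drop k xs)) + 1"
    using assms xs unfolding k_def by auto presburger
  ultimately show thesis by (rule that)
qed

definition lift_profile ::
    "'a \<Rightarrow> 'a \<Rightarrow> 'a list multiset \<Rightarrow> 'a list multiset \<Rightarrow> 'a list multiset" where
  "lift_profile p q Top Bot = image_mset (\<lambda>r. p # q # r) Top + image_mset (\<lambda>r. r @ [q, p]) Bot"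

context
  fixes B :: "'a set" and p q :: 'a and Top Bot :: "'a list multiset"
  assumes voters: "\<forall>r \<in># Top + Bot. is_voter B r"
    and new: "p \<notin> B" "q \<notin> B" "p \<noteq> q"
begin

lemma lift_profile_voters:
  "r \<in># lift_profile p q Top Bot \<Longrightarrow> is_voter (insert p (insert q B)) r"
  using voters new unfolding lift_profile_def is_voter_def by auto

lemma margin_lift_profile_old:
  assumes "x \<in> B" "y \<in> B"
  shows "margin (lift_profile p q Top Bot) x y = margin (Top + Bot) x y"
proof -
  have "x \<noteq> p" "x \<noteq> q" "y \<noteq> p" "y \<noteq> q" using assms new by auto
  then show ?thesis
    unfolding lift_profile_def margin_union
    by (subst (1 2) margin_image_mset_eq) auto
qed

lemma margin_lift_profile_new:
  assumes "c \<in> {p, q}" "y \<in> B"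
  shows "margin (lift_profile p q Top Bot) c y = int (size Top) - int (size Bot)"
proof -
  have "c \<notin> B" "y \<noteq> p" "y \<noteq> q" using assms new by auto
  then have "margin (image_mset (\<lambda>r. p # q # r) Top) c y = int (size Top)"
    and "margin (image_mset (\<lambda>r. r @ [q, p]) Bot) y c = int (size Bot)"
    using assms voters
    by (auto intro!: margin_image_mset_above simp: is_voter_def not_ranks_above_if_notin)
  then show ?thesis
    unfolding lift_profile_def margin_union by (simp add: margin_antisym[of _ c y])
qed

lemma margin_lift_profile_top:
  "margin (lift_profile p q Top Bot) p q = int (size Top) - int (size Bot)"
proof -
  have "margin (image_mset (\<lambda>r. p # q # r) Top) p q = int (size Top)"
    and "margin (image_mset (\<lambda>r. r @ [q, p]) Bot) q p = int (size Bot)"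
    using new voters
    by (auto intro!: margin_image_mset_above simp: is_voter_def not_ranks_above_if_notin)
  then show ?thesis
    unfolding lift_profile_def margin_union by (simp add: margin_antisym[of _ p q])
qed

end

lemma reversing_pair:
  assumes "finite B" "Sa \<subseteq> B" "Sb \<subseteq> B" "a \<notin> B" "b \<notin> B" "a \<noteq> b"
  obtains v1 v2 where
    "is_voter (insert a (insert b B)) v1" "is_voter (insert a (insert b B)) v2"
    "\<And>x y. x \<in> B \<Longrightarrow> y \<in> B \<Longrightarrow> margin {#v1, v2#} x y = 0"
    "\<And>y. y \<in> B \<Longrightarrow> margin {#v1, v2#} a y = (if y \<in> Sa then -2 else 0)"
    "\<And>y. y \<in> B \<Longrightarrow> margin {#v1, v2#} b y = (if y \<in> Sb then -2 else 0)"
    "margin {#v1, v2#} a b = 0"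
proof -
  obtain X Y Z W where lists: "distinct X" "distinct Y" "distinct Z" "distinct W"
    and sets: "set X = Sa - Sb" "set Y = Sa \<inter> Sb" "set Z = Sb - Sa" "set W = B - Sa - Sb"
    using finite_distinct_list assms(1-3) by (metis finite_Diff finite_Int finite_subset)
  \<comment> \<open>On B the two voters are mutually reverse, so they cancel there. The candidate a loses to
    Sa in both voters and splits against the rest; b is above exactly W in v1 and exactly X in v2,
    so it loses twice to Sb = set Y \<union> set Z and splits against the rest.\<close>
  define v1 where "v1 = X @ Y @ a # Z @ b # W"
  define v2 where "v2 = rev W @ rev Z @ rev Y @ b # rev X @ [a]"
  have B: "B = set X \<union> set Y \<union> set Z \<union> set W" using sets assms(2,3) by auto
  have new: "a \<notin> Sa" "a \<notin> Sb" "b \<notin> Sa" "b \<notin> Sb" using assms(2-5) by auto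
  have distinct: "distinct v1" "distinct v2"
    unfolding v1_def v2_def using lists sets new assms(4-6) by auto
  show ?thesis
  proof
    have "set v1 = insert a (insert b B)" "set v2 = insert a (insert b B)"
      unfolding v1_def v2_def B by auto
    then show "is_voter (insert a (insert b B)) v1" "is_voter (insert a (insert b B)) v2"
      using distinct unfolding is_voter_def by blast+
  next
    have reversed: "ranks_above v2 x y \<longleftrightarrow> ranks_above v1 y x" if "x \<in> B" "y \<in> B" for x y
    proof -
      have "filter (\<lambda>z. z \<in> B) v2 = rev (filter (\<lambda>z. z \<in> B) v1)"
        unfolding v1_def v2_def using assms(4,5) by (simp add: rev_filter)
      then show ?thesis
        using ranks_above_filter[of "\<lambda>z. z \<in> B", OF that] ranks_above_filter[of "\<lambda>z. z \<in> B" y x]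
          that by (metis ranks_above_rev)
    qed
    fix x y assume "x \<in> B" "y \<in> B"
    then show "margin {#v1, v2#} x y = 0"
      using reversed[of x y] reversed[of y x] by (simp add: margin_add_mset)
  next
    fix y assume "y \<in> B"
    then show "margin {#v1, v2#} a y = (if y \<in> Sa then -2 else 0)"
      unfolding v1_def v2_def using sets new assms
      by (auto simp: margin_add_mset not_ranks_above_if_notin)
  next
    fix y assume "y \<in> B"
    then show "margin {#v1, v2#} b y = (if y \<in> Sb then -2 else 0)"
      unfolding v1_def v2_def using sets new assms
      by (auto simp: margin_add_mset not_ranks_above_if_notin)
  next
    have "ranks_above v1 a b" "ranks_above v2 b a" by (simp_all add: v1_def v2_def)
    then show "margin {#v1, v2#} a b = 0"
      using distinct by (simp add: margin_add_mset ranks_above_asym)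
  qed
qed

lemma generates_insert_two_if_margins:
  assumes tour: "tournament A T" and A: "A = insert p (insert q B)" and pq: "(p, q) \<in> T"
    and voters: "is_voter_set A U'"
    and gen: "generates B U (T \<inter> B \<times> B)"
    and old: "\<And>x y. x \<in> B \<Longrightarrow> y \<in> B \<Longrightarrow> margin U' x y = margin U x y"
    and new: "\<And>c y. c \<in> {p, q} \<Longrightarrow> y \<in> B \<Longrightarrow> margin U' c y = (if (y, c) \<in> T then -1 else 1)"
    and top: "margin U' p q = 1"
  shows "generates A U' T"
proof (rule generates_if_margin_positive[OF tour voters])
  fix x y assume xy: "(x, y) \<in> T"
  have "x \<in> A" "y \<in> A" using xy tour unfolding tournament_def by blast+
  moreover have "x \<noteq> y" using xy tour \<open>x \<in> A\<close> unfolding tournament_def by blast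
  ultimately have yx: "(y, x) \<notin> T" using xy tour unfolding tournament_def by blast
  from \<open>x \<in> A\<close> \<open>y \<in> A\<close> \<open>x \<noteq> y\<close>
  consider "x \<in> B" "y \<in> B" | "x \<in> {p, q}" "y \<in> B" | "x \<in> B" "y \<in> {p, q}"
    | "x = p" "y = q" | "x = q" "y = p"
    unfolding A by blast
  then show "0 < margin U' x y"
  proof cases
    case 1
    then show ?thesis using gen xy old \<open>x \<noteq> y\<close> unfolding generates_iff_margin by auto
  next
    case 2
    then show ?thesis using new yx by simp
  next
    case 3
    then show ?thesis using new[of y x] margin_antisym[of U' y x] xy by simp
  next
    case 4
    then show ?thesis using top by simp
  next
    case 5
    then show ?thesis using pq yx by simp
  qed
qed

lemma generates_insert_two:
  assumes tour: "tournament A T" and fin: "finite A" and ab: "a \<in> A" "b \<in> A" "a \<noteq> b"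
    and gen: "generates (A - {a, b}) U (T \<inter> (A - {a, b}) \<times> (A - {a, b}))"
    and odd: "odd (size U)"
  shows "\<exists>U'. generates A U' T \<and> size U' = size U + 2"
proof -
  define B where "B = A - {a, b}"
  obtain p q where pq: "(p, q) \<in> T" "{p, q} = {a, b}"
    using tour ab unfolding tournament_def by blast
  then have new: "p \<noteq> q" "p \<notin> B" "q \<notin> B" and A: "A = insert p (insert q B)"
    using ab unfolding B_def by (auto simp: doubleton_eq_iff)
  obtain Top Bot where U: "U = Top + Bot" "size Top = size Bot + 1"
    using odd_size_mset_split[OF odd] by blast
  have voters: "\<forall>r \<in># Top + Bot. is_voter B r"
    using gen U unfolding generates_def is_voter_set_def B_def by blast
  have "finite B" using fin unfolding B_def by simp
  obtain v1 v2 where pair: "is_voter A v1" "is_voter A v2"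
    "\<And>x y. x \<in> B \<Longrightarrow> y \<in> B \<Longrightarrow> margin {#v1, v2#} x y = 0"
    "\<And>y. y \<in> B \<Longrightarrow> margin {#v1, v2#} p y = (if y \<in> {y \<in> B. (y, p) \<in> T} then -2 else 0)"
    "\<And>y. y \<in> B \<Longrightarrow> margin {#v1, v2#} q y = (if y \<in> {y \<in> B. (y, q) \<in> T} then -2 else 0)"
    "margin {#v1, v2#} p q = 0"
    using reversing_pair[OF \<open>finite B\<close>, of "{y \<in> B. (y, p) \<in> T}" "{y \<in> B. (y, q) \<in> T}" p q] new
    unfolding A[symmetric] by blast
  define U' where "U' = lift_profile p q Top Bot + {#v1, v2#}"
  note lift = margin_lift_profile_old[OF voters new(2,3,1)]
    margin_lift_profile_new[OF voters new(2,3,1)] margin_lift_profile_top[OF voters new(2,3,1)]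
  have margin_U': "margin U' x y = margin (lift_profile p q Top Bot) x y + margin {#v1, v2#} x y"
    for x y unfolding U'_def by (rule margin_union)
  have "generates A U' T"
  proof (rule generates_insert_two_if_margins[OF tour A pq(1) _ gen[folded B_def]])
    show "is_voter_set A U'"
      using lift_profile_voters[OF voters new(2,3,1)] pair(1,2) A
      unfolding U'_def is_voter_set_def by auto
    show "margin U' x y = margin U x y" if "x \<in> B" "y \<in> B" for x y
      using margin_U' lift(1)[OF that] pair(3)[OF that] U by simp
    show "margin U' c y = (if (y, c) \<in> T then -1 else 1)" if "c \<in> {p, q}" "y \<in> B" for c y
    proof -
      have "margin {#v1, v2#} c y = (if (y, c) \<in> T then -2 else 0)"
        using pair(4,5) that by auto
      then show ?thesis using margin_U' lift(2)[OF that] U by simp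
    qed
    show "margin U' p q = 1"
      using margin_U' lift(3) pair(6) U by simp
  qed
  moreover have "size U' = size U + 2" using U unfolding U'_def lift_profile_def by simp
  ultimately show ?thesis by blast
qed

lemma generates_exists:
  assumes "finite A" "tournament A T"
  shows "\<exists>U. generates A U T"
  using assms
proof (induction "card A" arbitrary: A T rule: less_induct)
  case less
  show ?case
  proof (cases "card A \<le> 1")
    case True
    obtain r where "distinct r" "set r = A" using finite_distinct_list[OF less.prems(1)] by blast
    moreover have "\<forall>x\<in>A. \<forall>y\<in>A. x = y" using True card_le_Suc0_iff_eq[OF less.prems(1)] by simp
    ultimately have "generates A {#r#} T"
      unfolding generates_def is_voter_set_def is_voter_def by auto
    then show ?thesis ..
  next
    case False
    then obtain a b where ab: "a \<in> A" "b \<in> A" "a \<noteq> b"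
      using card_le_Suc0_iff_eq[OF less.prems(1)] by auto
    define B where "B = A - {a, b}"
    have "card B < card A"
      using False ab less.prems(1) unfolding B_def by (simp add: card_Diff_subset)
    moreover have "tournament B (T \<inter> B \<times> B)"
      using tournament_restrict[OF less.prems(2)] unfolding B_def by blast
    ultimately obtain U where "generates B U (T \<inter> B \<times> B)"
      using less.hyps less.prems(1) unfolding B_def by blast
    then obtain U' where "generates B U' (T \<inter> B \<times> B)" "odd (size U')"
      using generates_odd_subprofile \<open>tournament B (T \<inter> B \<times> B)\<close> by blast
    then show ?thesis using generates_insert_two[OF less.prems(2,1) ab] unfolding B_def by blast
  qed
qed

lemma vnum_le:
  assumes "generates A U T"
  shows "vnum A T \<le> size U"
  unfolding vnum_def using assms
  by (intro Least_le[of "\<lambda>k. \<exists>U. generates A U T \<and> size U = k"]) blast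

lemma vnum_attained:
  assumes "finite A" "tournament A T"
  obtains U where "generates A U T" "size U = vnum A T"
proof -
  obtain U0 where "generates A U0 T" using generates_exists[OF assms] by blast
  then have "\<exists>U. generates A U T \<and> size U = vnum A T"
    unfolding vnum_def
    using LeastI[of "\<lambda>k. \<exists>U. generates A U T \<and> size U = k" "size U0"] by blast
  then show thesis using that by blast
qed

theorem theorem1:
  fixes A :: "'a set" and T :: "('a \<times> 'a) set" and a b :: 'a and n :: nat
  assumes "n \<ge> 1"
    and "finite A" and "card A = n + 2"
    and "tournament A T"
    and "a \<in> A" and "b \<in> A" and "a \<noteq> b"
  shows "vnum A T \<le> vnum (A - {a, b}) (T \<inter> ((A - {a, b}) \<times> (A - {a, b}))) + 2"
proof -
  define B where "B = A - {a, b}"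
  have "tournament B (T \<inter> B \<times> B)"
    using tournament_restrict[OF assms(4)] unfolding B_def by blast
  moreover have "finite B" using assms(2) unfolding B_def by simp
  ultimately obtain U where U: "generates B U (T \<inter> B \<times> B)" "size U = vnum B (T \<inter> B \<times> B)"
    using vnum_attained by blast
  obtain U1 where U1: "generates B U1 (T \<inter> B \<times> B)" "odd (size U1)" "size U1 \<le> size U"
    using generates_odd_subprofile[OF U(1) \<open>tournament B _\<close>] by blast
  obtain U2 where "generates A U2 T" "size U2 = size U1 + 2"
    using generates_insert_two[OF assms(4,2,5-7)] U1(1,2) unfolding B_def by blast
  then have "vnum A T \<le> size U1 + 2" using vnum_le by metis
  then show ?thesis using U(2) U1(3) unfolding B_def by linarith
qed

end
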